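(* For $i=1,\dots,m$ let $n_i\in\mathbb N$ and let $f_i:\mathbb{R}^{n_i}\to(-\infty,+\infty]$ be lower semicontinuous and variationally convex at $\bar x_i$ for $\bar v_i\in\partial f_i(\bar x_i)$. Then the separable sum $f:=f_1\oplus\cdots\oplus f_m$, $f(x_1,\dots,x_m)=\sum_{i=1}^mf_i(x_i)$, is variationally convex at $\bar x:=(\bar x_1,\dots,\bar x_m)$ for $\bar v:=(\bar v_1,\dots,\bar v_m)\in\partial f(\bar x)$.
   Context: $\partial$ is the limiting (Mordukhovich) subdifferential. A lsc $h$ is variationally convex at $\bar x$ for $\bar v\in\partial h(\bar x)$ if for some convex neighborhood $U\times V$ of $(\bar x,\bar v)$ there are a lsc convex function $\varphi\le h$ on $U$ and $\varepsilon>0$ such that $[U_\varepsilon\times V]\cap\operatorname{gph}\partial h=[U\times V]\cap\operatorname{gph}\partial\varphi$ and $h(x)=\varphi(x)$ at the common elements $(x,v)$, where $U_\varepsilon=\{x\in U:h(x)<h(\bar x)+\varepsilon\}$. *)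

theory Defs
  imports Complex_Main "HOL-Library.Extended_Real"
begin

text \<open>Euclidean space R^n is modelled concretely as the functions nat => real
  that vanish at all coordinates j >= n (coordinates 0..n-1).  This allows the
  dimensions n_1,...,n_m of the blocks to vary with the block index.\<close>

definition Rn :: "nat \<Rightarrow> (nat \<Rightarrow> real) set" where
  "Rn n = {x. \<forall>j\<ge>n. x j = 0}"

definition ip :: "nat \<Rightarrow> (nat \<Rightarrow> real) \<Rightarrow> (nat \<Rightarrow> real) \<Rightarrow> real" where
  "ip n x y = (\<Sum>j<n. x j * y j)"

definition vdist :: "nat \<Rightarrow> (nat \<Rightarrow> real) \<Rightarrow> (nat \<Rightarrow> real) \<Rightarrow> real" where
  "vdist n x y = sqrt (\<Sum>j<n. (x j - y j)^2)"

definition vdiff :: "(nat \<Rightarrow> real) \<Rightarrow> (nat \<Rightarrow> real) \<Rightarrow> (nat \<Rightarrow> real)" where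
  "vdiff x y = (\<lambda>j. x j - y j)"

definition vcomb :: "real \<Rightarrow> (nat \<Rightarrow> real) \<Rightarrow> (nat \<Rightarrow> real) \<Rightarrow> (nat \<Rightarrow> real)" where
  "vcomb t x y = (\<lambda>j. t * x j + (1 - t) * y j)"

definition lsc_n :: "nat \<Rightarrow> ((nat \<Rightarrow> real) \<Rightarrow> ereal) \<Rightarrow> bool" where
  "lsc_n n h \<longleftrightarrow> (\<forall>x\<in>Rn n. \<forall>c. c < h x \<longrightarrow>
      (\<exists>\<delta>>0. \<forall>y\<in>Rn n. vdist n y x < \<delta> \<longrightarrow> c < h y))"

definition no_minf :: "nat \<Rightarrow> ((nat \<Rightarrow> real) \<Rightarrow> ereal) \<Rightarrow> bool" where
  "no_minf n h \<longleftrightarrow> (\<forall>x\<in>Rn n. h x \<noteq> -\<infinity>)"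

definition convex_set_n :: "nat \<Rightarrow> (nat \<Rightarrow> real) set \<Rightarrow> bool" where
  "convex_set_n n U \<longleftrightarrow> U \<subseteq> Rn n \<and>
     (\<forall>x\<in>U. \<forall>y\<in>U. \<forall>t\<in>{0..1}. vcomb t x y \<in> U)"

definition nhd_n :: "nat \<Rightarrow> (nat \<Rightarrow> real) set \<Rightarrow> (nat \<Rightarrow> real) \<Rightarrow> bool" where
  "nhd_n n U x \<longleftrightarrow> U \<subseteq> Rn n \<and> x \<in> Rn n \<and>
     (\<exists>r>0. {y\<in>Rn n. vdist n y x < r} \<subseteq> U)"

definition convex_fn_n :: "nat \<Rightarrow> ((nat \<Rightarrow> real) \<Rightarrow> ereal) \<Rightarrow> bool" where
  "convex_fn_n n h \<longleftrightarrow> (\<forall>x\<in>Rn n. \<forall>y\<in>Rn n. \<forall>t\<in>{0<..<1}.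
      h (vcomb t x y) \<le> ereal t * h x + ereal (1 - t) * h y)"

definition rsd :: "nat \<Rightarrow> ((nat \<Rightarrow> real) \<Rightarrow> ereal) \<Rightarrow> (nat \<Rightarrow> real) \<Rightarrow> (nat \<Rightarrow> real) set" where
  "rsd n h x = {v. x \<in> Rn n \<and> v \<in> Rn n \<and> \<bar>h x\<bar> \<noteq> \<infinity> \<and>
     (\<forall>\<epsilon>>0. \<exists>\<delta>>0. \<forall>y\<in>Rn n. vdist n y x < \<delta> \<longrightarrow>
        h y \<ge> h x + ereal (ip n v (vdiff y x) - \<epsilon> * vdist n y x))}"

definition lsd :: "nat \<Rightarrow> ((nat \<Rightarrow> real) \<Rightarrow> ereal) \<Rightarrow> (nat \<Rightarrow> real) \<Rightarrow> (nat \<Rightarrow> real) set" where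
  "lsd n h x = {v. x \<in> Rn n \<and> v \<in> Rn n \<and> \<bar>h x\<bar> \<noteq> \<infinity> \<and>
     (\<exists>xs vs. (\<forall>k. vs k \<in> rsd n h (xs k)) \<and>
        (\<lambda>k. vdist n (xs k) x) \<longlonglongrightarrow> 0 \<and>
        (\<lambda>k. h (xs k)) \<longlonglongrightarrow> h x \<and>
        (\<lambda>k. vdist n (vs k) v) \<longlonglongrightarrow> 0)}"

definition var_convex :: "nat \<Rightarrow> ((nat \<Rightarrow> real) \<Rightarrow> ereal) \<Rightarrow> (nat \<Rightarrow> real) \<Rightarrow> (nat \<Rightarrow> real) \<Rightarrow> bool" where
  "var_convex n h xb vb \<longleftrightarrow> vb \<in> lsd n h xb \<and>
     (\<exists>U V \<phi> \<epsilon>. convex_set_n n U \<and> convex_set_n n V \<and> nhd_n n U xb \<and> nhd_n n V vb \<and>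
        lsc_n n \<phi> \<and> no_minf n \<phi> \<and> convex_fn_n n \<phi> \<and> (\<forall>x\<in>U. \<phi> x \<le> h x) \<and> \<epsilon> > 0 \<and>
        {(x, v). x \<in> U \<and> h x < h xb + ereal \<epsilon> \<and> v \<in> V \<and> v \<in> lsd n h x}
          = {(x, v). x \<in> U \<and> v \<in> V \<and> v \<in> lsd n \<phi> x} \<and>
        (\<forall>x v. x \<in> U \<and> v \<in> V \<and> v \<in> lsd n \<phi> x \<longrightarrow> h x = \<phi> x))"

definition offs :: "(nat \<Rightarrow> nat) \<Rightarrow> nat \<Rightarrow> nat" where
  "offs n i = (\<Sum>k<i. n k)"

definition blk :: "(nat \<Rightarrow> nat) \<Rightarrow> (nat \<Rightarrow> real) \<Rightarrow> nat \<Rightarrow> (nat \<Rightarrow> real)" where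
  "blk n x i = (\<lambda>j. if j < n i then x (offs n i + j) else 0)"

definition concat_blocks :: "(nat \<Rightarrow> nat) \<Rightarrow> nat \<Rightarrow> (nat \<Rightarrow> nat \<Rightarrow> real) \<Rightarrow> (nat \<Rightarrow> real)" where
  "concat_blocks n m xs = (\<lambda>j. \<Sum>i<m. if offs n i \<le> j \<and> j < offs n i + n i
                                        then xs i (j - offs n i) else 0)"

definition sep_sum :: "(nat \<Rightarrow> nat) \<Rightarrow> nat \<Rightarrow> (nat \<Rightarrow> (nat \<Rightarrow> real) \<Rightarrow> ereal) \<Rightarrow> (nat \<Rightarrow> real) \<Rightarrow> ereal" where
  "sep_sum n m f x = (\<Sum>i<m. f i (blk n x i))"

end

theory Submission
  imports Defs "HOL-Analysis.L2_Norm"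
begin

text \<open>Both subdifferentials of a separable sum split into blocks: \<open>v\<close> is a regular
  (limiting) subgradient of \<open>f\<close> at \<open>x\<close> iff every block \<open>v i\<close> is one of \<open>f i\<close> at \<open>x i\<close>; for
  the limiting subdifferential, lower semicontinuity turns the convergence of the sum
  \<open>f x\<^sub>k \<rightarrow> f x\<close> into convergence of each summand. Hence with \<open>U\<close>, \<open>V\<close> the products
  of blockwise neighbourhoods and \<open>\<phi>\<close> the separable sum of the blockwise convex minorants,
  the subdifferential graphs of \<open>f\<close> and \<open>\<phi>\<close> agree, provided the level condition
  \<open>f x < f xb + \<epsilon>\<close> can be passed between the sum and its summands. This is arranged by
  shrinking the blockwise neighbourhoods until \<open>f i\<close> stays above \<open>f i (xb i) - \<eta>\<close> on
  \<open>U i\<close> (lower semicontinuity) and, on the graph of the subdifferential of \<open>\<phi> i\<close>, below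
  \<open>f i (xb i) + \<eta>\<close> (subgradient inequality of the convex \<open>\<phi> i\<close> at \<open>xb i\<close>), with \<open>\<eta>\<close>
  small compared with every blockwise \<open>\<epsilon> i\<close>.\<close>

section \<open>Distances and inner products on \<open>Rn\<close>\<close>

lemma vdist_eq_L2_set: "vdist n x y = L2_set (vdiff x y) {..<n}"
  by (simp add: vdist_def L2_set_def vdiff_def)

lemma vdist_nonneg [simp]: "0 \<le> vdist n x y"
  by (simp add: vdist_eq_L2_set)

lemma vdist_commute: "vdist n x y = vdist n y x"
  unfolding vdist_def by (simp add: power2_commute)

lemma vdist_self [simp]: "vdist n x x = 0"
  by (simp add: vdist_def)

lemma abs_coord_diff_le_vdist:
  assumes "j < n"
  shows "\<bar>x j - y j\<bar> \<le> vdist n x y"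
proof -
  have "\<bar>x j - y j\<bar> \<le> L2_set (\<lambda>i. \<bar>vdiff x y i\<bar>) {..<n}"
    using assms member_le_L2_set[of "{..<n}" j "\<lambda>i. \<bar>vdiff x y i\<bar>"] by (simp add: vdiff_def)
  also have "\<dots> = vdist n x y"
    unfolding vdist_eq_L2_set L2_set_def by simp
  finally show ?thesis .
qed

lemma tendsto_coord_of_vdist:
  assumes "(\<lambda>k. vdist n (X k) x) \<longlonglongrightarrow> 0" and "j < n"
  shows "(\<lambda>k. X k j) \<longlonglongrightarrow> x j"
proof -
  have "(\<lambda>k. \<bar>X k j - x j\<bar>) \<longlonglongrightarrow> 0"
    using abs_coord_diff_le_vdist[OF assms(2)]
    by (intro tendsto_sandwich[OF _ _ tendsto_const assms(1)]) auto
  then show ?thesis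
    by (simp add: tendsto_rabs_zero_iff LIM_zero_cancel)
qed

lemma abs_ip_le_L2_set: "\<bar>ip n v w\<bar> \<le> L2_set v {..<n} * L2_set w {..<n}"
proof -
  have "\<bar>ip n v w\<bar> \<le> (\<Sum>j<n. \<bar>v j\<bar> * \<bar>w j\<bar>)"
    unfolding ip_def abs_mult[symmetric] by (rule sum_abs)
  also have "\<dots> \<le> L2_set v {..<n} * L2_set w {..<n}"
    by (rule L2_set_mult_ineq)
  finally show ?thesis .
qed

lemma L2_set_le_add_vdist: "L2_set v {..<n} \<le> L2_set w {..<n} + vdist n v w"
proof -
  have "L2_set (\<lambda>j. vdiff v w j + w j) {..<n} \<le> L2_set (vdiff v w) {..<n} + L2_set w {..<n}"
    by (rule L2_set_triangle_ineq)
  then show ?thesis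
    by (simp add: vdist_eq_L2_set vdiff_def)
qed

lemma ip_scale_right: "ip n v (\<lambda>j. t * w j) = t * ip n v w"
  unfolding ip_def by (simp add: sum_distrib_left algebra_simps)

lemma vcomb_in_Rn: "x \<in> Rn n \<Longrightarrow> y \<in> Rn n \<Longrightarrow> vcomb t x y \<in> Rn n"
  by (simp add: Rn_def vcomb_def)

lemma vdiff_vcomb_left: "vdiff (vcomb t y x) x = (\<lambda>j. t * vdiff y x j)"
  by (auto simp: vdiff_def vcomb_def algebra_simps)

lemma vdist_vcomb_left: "0 \<le> t \<Longrightarrow> vdist n (vcomb t y x) x = t * vdist n y x"
  unfolding vdist_eq_L2_set vdiff_vcomb_left by (simp add: L2_set_right_distrib)

lemma vdist_vcomb_le:
  assumes "0 \<le> t" "t \<le> 1"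
  shows "vdist n (vcomb t x y) c \<le> t * vdist n x c + (1 - t) * vdist n y c"
proof -
  have "vdiff (vcomb t x y) c = (\<lambda>j. t * vdiff x c j + (1 - t) * vdiff y c j)"
    by (auto simp: vdiff_def vcomb_def algebra_simps)
  then have "vdist n (vcomb t x y) c
      \<le> L2_set (\<lambda>j. t * vdiff x c j) {..<n} + L2_set (\<lambda>j. (1 - t) * vdiff y c j) {..<n}"
    unfolding vdist_eq_L2_set by (simp only: L2_set_triangle_ineq)
  also have "\<dots> = t * vdist n x c + (1 - t) * vdist n y c"
    using assms by (simp add: vdist_eq_L2_set L2_set_right_distrib)
  finally show ?thesis .
qed

lemma convex_set_n_ball: "convex_set_n n {y \<in> Rn n. vdist n y c < r}"
  unfolding convex_set_n_def
proof (intro conjI ballI)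
  fix x y t
  assume x: "x \<in> {y \<in> Rn n. vdist n y c < r}" and y: "y \<in> {y \<in> Rn n. vdist n y c < r}"
    and t: "t \<in> {0..1::real}"
  have "vdist n (vcomb t x y) c \<le> t * vdist n x c + (1 - t) * vdist n y c"
    using t by (intro vdist_vcomb_le) auto
  also have "\<dots> < r"
    using x y t by (intro convex_bound_lt) auto
  finally show "vcomb t x y \<in> {y \<in> Rn n. vdist n y c < r}"
    using x y by (simp add: vcomb_in_Rn)
qed auto

lemma convex_set_n_Int: "convex_set_n n A \<Longrightarrow> convex_set_n n B \<Longrightarrow> convex_set_n n (A \<inter> B)"
  unfolding convex_set_n_def by auto

lemma nhd_n_center: "nhd_n n U x \<Longrightarrow> x \<in> U"
  unfolding nhd_n_def by force

lemma nhd_n_Int_ball: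
  assumes "nhd_n n U x" "r > 0"
  shows "nhd_n n (U \<inter> {y \<in> Rn n. vdist n y x < r}) x"
proof -
  obtain r0 where "r0 > 0" and r0: "{y \<in> Rn n. vdist n y x < r0} \<subseteq> U"
    using assms(1) unfolding nhd_n_def by blast
  then have "{y \<in> Rn n. vdist n y x < min r0 r} \<subseteq> U \<inter> {y \<in> Rn n. vdist n y x < r}"
    by auto
  then show ?thesis
    using assms \<open>r0 > 0\<close> unfolding nhd_n_def by (intro conjI exI[of _ "min r0 r"]) auto
qed

lemma ex_pos_le_all:
  assumes "\<And>i. i < (m::nat) \<Longrightarrow> (0::real) < r i"
  obtains d where "d > 0" "\<And>i. i < m \<Longrightarrow> d \<le> r i"
proof
  let ?R = "insert 1 (r ` {..<m})"
  show "Min ?R > 0"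
    using assms by (simp add: Min_gr_iff)
  show "Min ?R \<le> r i" if "i < m" for i
    using that by (intro Min_le) auto
qed

lemma L2_set_if_eq:
  assumes "finite A" "i \<in> A"
  shows "L2_set (\<lambda>k. if k = i then a else 0) A = \<bar>a\<bar>"
proof -
  have "L2_set (\<lambda>k. if k = i then a else 0) A = sqrt (\<Sum>k\<in>A. if k = i then a\<^sup>2 else 0)"
    unfolding L2_set_def by (intro arg_cong[where f = sqrt] sum.cong) auto
  also have "\<dots> = \<bar>a\<bar>"
    using assms by simp
  finally show ?thesis .
qed

section \<open>Block decomposition\<close>

lemma offs_Suc: "offs n (Suc i) = offs n i + n i"
  by (simp add: offs_def)

lemma offs_add_le: "i < k \<Longrightarrow> offs n i + n i \<le> offs n k"
  using sum_mono2[of "{..<k}" "{..<Suc i}" n] by (simp add: offs_def)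

lemma sum_lessThan_add: "(\<Sum>j<(a::nat) + b. g j) = (\<Sum>j<a. g j) + (\<Sum>j<b. g (a + j))"
  by (induction b) (auto simp: add.assoc)

lemma sum_lessThan_offs: "(\<Sum>j<offs n m. g j) = (\<Sum>i<m. \<Sum>j<n i. g (offs n i + j))"
  by (induction m) (auto simp: offs_Suc sum_lessThan_add offs_def[of n 0])

lemma blk_in_Rn [simp]: "blk n x i \<in> Rn (n i)"
  by (simp add: blk_def Rn_def)

lemma blk_vdiff: "blk n (vdiff x y) i = vdiff (blk n x i) (blk n y i)"
  by (auto simp: blk_def vdiff_def)

lemma blk_vcomb: "blk n (vcomb t x y) i = vcomb t (blk n x i) (blk n y i)"
  by (auto simp: blk_def vcomb_def)

lemma concat_blocks_in_Rn [simp]: "concat_blocks n m xs \<in> Rn (offs n m)"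
  unfolding Rn_def concat_blocks_def
proof (intro CollectI allI impI sum.neutral ballI)
  fix j i assume "offs n m \<le> j" "i \<in> {..<m}"
  then show "(if offs n i \<le> j \<and> j < offs n i + n i then xs i (j - offs n i) else 0) = 0"
    using offs_add_le[of i m n] by auto
qed

lemma blk_concat_blocks:
  assumes "i < m" "xs i \<in> Rn (n i)"
  shows "blk n (concat_blocks n m xs) i = xs i"
proof
  fix j
  show "blk n (concat_blocks n m xs) i j = xs i j"
  proof (cases "j < n i")
    case True
    let ?g = "\<lambda>k. if offs n k \<le> offs n i + j \<and> offs n i + j < offs n k + n k
                   then xs k (offs n i + j - offs n k) else 0"
    have "?g k = 0" if "k \<in> {..<m} - {i}" for k
      using that True offs_add_le[of i k n] offs_add_le[of k i n] by (cases "k < i") auto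
    then have "sum ?g {..<m} = ?g i"
      using assms(1) by (subst sum.remove[of _ i]) auto
    then show ?thesis
      using True by (simp add: blk_def concat_blocks_def)
  next
    case False
    then show ?thesis
      using assms(2) by (simp add: blk_def Rn_def)
  qed
qed

lemma vdist_blocks:
  "vdist (offs n m) x y = L2_set (\<lambda>i. vdist (n i) (blk n x i) (blk n y i)) {..<m}"
  unfolding L2_set_def vdist_def by (simp add: blk_def sum_nonneg sum_lessThan_offs)

lemma vdist_blk_le: "i < m \<Longrightarrow> vdist (n i) (blk n x i) (blk n y i) \<le> vdist (offs n m) x y"
  unfolding vdist_blocks by (rule member_le_L2_set) auto

lemma tendsto_vdist_blk:
  assumes "(\<lambda>k. vdist (offs n m) (X k) y) \<longlonglongrightarrow> 0" "i < m"
  shows "(\<lambda>k. vdist (n i) (blk n (X k) i) (blk n y i)) \<longlonglongrightarrow> 0"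
  using vdist_blk_le[OF assms(2)] by (intro tendsto_sandwich[OF _ _ tendsto_const assms(1)]) auto

lemma tendsto_vdist_of_blocks:
  assumes "\<And>i. i < m \<Longrightarrow> (\<lambda>k. vdist (n i) (blk n (X k) i) (blk n y i)) \<longlonglongrightarrow> 0"
  shows "(\<lambda>k. vdist (offs n m) (X k) y) \<longlonglongrightarrow> 0"
proof -
  have "(\<lambda>k. sqrt (\<Sum>i<m. (vdist (n i) (blk n (X k) i) (blk n y i))\<^sup>2)) \<longlonglongrightarrow> sqrt (\<Sum>i<m. 0\<^sup>2)"
    using assms by (intro tendsto_intros) auto
  then show ?thesis
    by (simp add: vdist_blocks L2_set_def)
qed

lemma ip_blocks: "ip (offs n m) v w = (\<Sum>i<m. ip (n i) (blk n v i) (blk n w i))"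
  unfolding ip_def by (simp add: sum_lessThan_offs blk_def)

lemma sep_sum_remove:
  "i < m \<Longrightarrow> sep_sum n m f x = f i (blk n x i) + (\<Sum>k\<in>{..<m} - {i}. f k (blk n x k))"
  unfolding sep_sum_def by (intro sum.remove) auto

definition block_prod :: "(nat \<Rightarrow> nat) \<Rightarrow> nat \<Rightarrow> (nat \<Rightarrow> (nat \<Rightarrow> real) set) \<Rightarrow> (nat \<Rightarrow> real) set"
  where "block_prod n m U = {x \<in> Rn (offs n m). \<forall>i<m. blk n x i \<in> U i}"

lemma convex_set_n_block_prod:
  assumes "\<And>i. i < m \<Longrightarrow> convex_set_n (n i) (U i)"
  shows "convex_set_n (offs n m) (block_prod n m U)"
  using assms unfolding convex_set_n_def block_prod_def by (auto simp: vcomb_in_Rn blk_vcomb)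

lemma nhd_n_block_prod:
  assumes "\<And>i. i < m \<Longrightarrow> nhd_n (n i) (U i) (c i)"
  shows "nhd_n (offs n m) (block_prod n m U) (concat_blocks n m c)"
proof -
  have blk_c: "blk n (concat_blocks n m c) i = c i" if "i < m" for i
    using that assms[OF that] by (intro blk_concat_blocks) (auto simp: nhd_n_def)
  have "\<forall>i<m. \<exists>r>0. {y \<in> Rn (n i). vdist (n i) y (c i) < r} \<subseteq> U i"
    using assms unfolding nhd_n_def by blast
  then obtain r where r: "\<forall>i<m. r i > 0 \<and> {y \<in> Rn (n i). vdist (n i) y (c i) < r i} \<subseteq> U i"
    by metis
  obtain d where "d > 0" and d: "\<And>i. i < m \<Longrightarrow> d \<le> r i"
    using r ex_pos_le_all[of m r] by blast
  have "blk n y i \<in> U i"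
    if "y \<in> Rn (offs n m)" "vdist (offs n m) y (concat_blocks n m c) < d" "i < m" for y i
    using that r d[of i] vdist_blk_le[of i m n y "concat_blocks n m c"] by (force simp: blk_c)
  then show ?thesis
    using \<open>d > 0\<close> unfolding nhd_n_def block_prod_def by (intro conjI exI[of _ d]) auto
qed

section \<open>Finite sums of extended reals\<close>

lemma sum_neq_minf: "(\<And>i. i \<in> A \<Longrightarrow> g i \<noteq> -\<infinity>) \<Longrightarrow> sum g A \<noteq> (-\<infinity> :: ereal)"
proof (induction A rule: infinite_finite_induct)
  case (insert a A)
  then show ?case
    by (cases "g a"; cases "sum g A") auto
qed auto

lemma sum_ereal_real:
  assumes "\<And>i. i \<in> A \<Longrightarrow> \<bar>g i\<bar> \<noteq> \<infinity>"
  shows "sum g A = ereal (\<Sum>i\<in>A. real_of_ereal (g i))"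
proof -
  have "(\<Sum>i\<in>A. ereal (real_of_ereal (g i))) = sum g A"
    using assms by (intro sum.cong) (auto simp: ereal_real')
  then show ?thesis
    by simp
qed

lemma abs_sum_neq_infinity_iff:
  assumes "finite A" "\<And>i. i \<in> A \<Longrightarrow> g i \<noteq> -\<infinity>"
  shows "\<bar>sum g A\<bar> \<noteq> (\<infinity> :: ereal) \<longleftrightarrow> (\<forall>i\<in>A. \<bar>g i\<bar> \<noteq> \<infinity>)"
  using sum_Pinfty[of g A] sum_neq_minf[of A g] assms by (auto simp: abs_ereal_ge0 ereal_infty_less_eq2)

lemma ereal_add_right_cancel_le:
  fixes a b s :: ereal
  assumes "\<bar>s\<bar> \<noteq> \<infinity>" "b + s + ereal r \<le> a + s"
  shows "b + ereal r \<le> a"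
  using assms by (cases a; cases b; cases s) auto

lemma tendsto_real_of_ereal_iff:
  assumes "\<And>k. \<bar>g k\<bar> \<noteq> \<infinity>" "\<bar>c\<bar> \<noteq> \<infinity>"
  shows "(g \<longlonglongrightarrow> c) \<longleftrightarrow> ((\<lambda>k. real_of_ereal (g k)) \<longlonglongrightarrow> real_of_ereal c)"
proof -
  have "g = (\<lambda>k. ereal (real_of_ereal (g k)))" "c = ereal (real_of_ereal c)"
    using assms by (auto simp: ereal_real')
  then show ?thesis
    by (metis lim_ereal)
qed

lemma abs_sep_sum_neq_infinity_iff:
  assumes "\<And>i. i < m \<Longrightarrow> no_minf (n i) (f i)"
  shows "\<bar>sep_sum n m f x\<bar> \<noteq> \<infinity> \<longleftrightarrow> (\<forall>i<m. \<bar>f i (blk n x i)\<bar> \<noteq> \<infinity>)"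
  using assms abs_sum_neq_infinity_iff[of "{..<m}" "\<lambda>i. f i (blk n x i)"]
  by (simp add: sep_sum_def no_minf_def Ball_def)

lemma sep_sum_eq_ereal:
  "(\<And>i. i < m \<Longrightarrow> \<bar>f i (blk n x i)\<bar> \<noteq> \<infinity>)
    \<Longrightarrow> sep_sum n m f x = ereal (\<Sum>i<m. real_of_ereal (f i (blk n x i)))"
  unfolding sep_sum_def by (rule sum_ereal_real) simp

section \<open>Subdifferentials of separable sums\<close>

definition blk_update :: "(nat \<Rightarrow> nat) \<Rightarrow> nat \<Rightarrow> (nat \<Rightarrow> real) \<Rightarrow> nat \<Rightarrow> (nat \<Rightarrow> real) \<Rightarrow> nat \<Rightarrow> real"
  where "blk_update n m x i y = concat_blocks n m (\<lambda>k. if k = i then y else blk n x k)"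

lemma blk_update_in_Rn [simp]: "blk_update n m x i y \<in> Rn (offs n m)"
  by (simp add: blk_update_def)

lemma blk_blk_update:
  "k < m \<Longrightarrow> y \<in> Rn (n i) \<Longrightarrow> blk n (blk_update n m x i y) k = (if k = i then y else blk n x k)"
  unfolding blk_update_def by (intro blk_concat_blocks) auto

lemma vdist_blk_update:
  assumes "i < m" "y \<in> Rn (n i)"
  shows "vdist (offs n m) (blk_update n m x i y) x = vdist (n i) y (blk n x i)"
proof -
  have "vdist (offs n m) (blk_update n m x i y) x
      = L2_set (\<lambda>k. if k = i then vdist (n i) y (blk n x i) else 0) {..<m}"
    unfolding vdist_blocks using assms(2) by (intro L2_set_cong) (auto simp: blk_blk_update)
  then show ?thesis
    using assms(1) by (simp add: L2_set_if_eq)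
qed

lemma ip_vdiff_blk_update:
  assumes "i < m" "y \<in> Rn (n i)"
  shows "ip (offs n m) v (vdiff (blk_update n m x i y) x) = ip (n i) (blk n v i) (vdiff y (blk n x i))"
proof -
  have "ip (offs n m) v (vdiff (blk_update n m x i y) x)
      = (\<Sum>k<m. if k = i then ip (n i) (blk n v i) (vdiff y (blk n x i)) else 0)"
    unfolding ip_blocks blk_vdiff using assms(2)
    by (intro sum.cong) (auto simp: blk_blk_update ip_def vdiff_def)
  then show ?thesis
    using assms(1) by simp
qed

lemma sep_sum_blk_update:
  assumes "i < m" "y \<in> Rn (n i)"
  shows "sep_sum n m f (blk_update n m x i y) = f i y + (\<Sum>k\<in>{..<m} - {i}. f k (blk n x k))"
proof -
  have "(\<Sum>k\<in>{..<m} - {i}. f k (blk n (blk_update n m x i y) k)) = (\<Sum>k\<in>{..<m} - {i}. f k (blk n x k))"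
    using assms(2) by (intro sum.cong) (auto simp: blk_blk_update)
  then show ?thesis
    using assms by (simp add: sep_sum_remove[of i] blk_blk_update)
qed

text \<open>Moving only the block \<open>i\<close> of \<open>x\<close> reduces the regular subgradient inequality of the
  sum to that of \<open>f i\<close>, the other summands cancelling.\<close>

lemma rsd_blk_of_rsd_sep_sum:
  assumes nm: "\<And>i. i < m \<Longrightarrow> no_minf (n i) (f i)"
    and v: "v \<in> rsd (offs n m) (sep_sum n m f) x" and i: "i < m"
  shows "blk n v i \<in> rsd (n i) (f i) (blk n x i)"
proof -
  have fin: "\<forall>k<m. \<bar>f k (blk n x k)\<bar> \<noteq> \<infinity>"
    using v abs_sep_sum_neq_infinity_iff[OF nm] by (simp add: rsd_def)
  define S where "S = (\<Sum>k\<in>{..<m} - {i}. f k (blk n x k))"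
  have "\<bar>S\<bar> \<noteq> \<infinity>"
    unfolding S_def using fin nm by (subst abs_sum_neq_infinity_iff) (auto simp: no_minf_def)
  have "\<exists>\<delta>>0. \<forall>y\<in>Rn (n i). vdist (n i) y (blk n x i) < \<delta> \<longrightarrow>
          f i (blk n x i) + ereal (ip (n i) (blk n v i) (vdiff y (blk n x i)) - \<epsilon> * vdist (n i) y (blk n x i)) \<le> f i y"
    if "\<epsilon> > 0" for \<epsilon>
  proof -
    obtain \<delta> where "\<delta> > 0" and \<delta>: "\<forall>z\<in>Rn (offs n m). vdist (offs n m) z x < \<delta> \<longrightarrow>
        sep_sum n m f x + ereal (ip (offs n m) v (vdiff z x) - \<epsilon> * vdist (offs n m) z x) \<le> sep_sum n m f z"
      using v \<open>\<epsilon> > 0\<close> unfolding rsd_def by blast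
    have "f i (blk n x i) + ereal (ip (n i) (blk n v i) (vdiff y (blk n x i)) - \<epsilon> * vdist (n i) y (blk n x i)) \<le> f i y"
      if y: "y \<in> Rn (n i)" "vdist (n i) y (blk n x i) < \<delta>" for y
    proof (rule ereal_add_right_cancel_le[OF \<open>\<bar>S\<bar> \<noteq> \<infinity>\<close>])
      have "sep_sum n m f x + ereal (ip (n i) (blk n v i) (vdiff y (blk n x i)) - \<epsilon> * vdist (n i) y (blk n x i))
          \<le> sep_sum n m f (blk_update n m x i y)"
        using \<delta>[rule_format, of "blk_update n m x i y"] i y
        by (simp add: vdist_blk_update ip_vdiff_blk_update)
      then show "f i (blk n x i) + S + ereal (ip (n i) (blk n v i) (vdiff y (blk n x i)) - \<epsilon> * vdist (n i) y (blk n x i))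
          \<le> f i y + S"
        by (simp only: sep_sum_remove[where n = n and f = f and x = x, OF i]
            sep_sum_blk_update[where n = n and f = f and x = x, OF i y(1)] S_def)
    qed
    with \<open>\<delta> > 0\<close> show ?thesis
      by blast
  qed
  then show ?thesis
    using fin i unfolding rsd_def by auto
qed

lemma sep_sum_subgradient_estimate:
  assumes "\<epsilon> \<ge> 0" and blk: "\<And>i. i < m \<Longrightarrow>
      f i (blk n x i) + ereal (ip (n i) (blk n v i) (vdiff (blk n y i) (blk n x i))
        - \<epsilon> * vdist (n i) (blk n y i) (blk n x i)) \<le> f i (blk n y i)"
  shows "sep_sum n m f x + ereal (ip (offs n m) v (vdiff y x) - \<epsilon> * (real m * vdist (offs n m) y x))
    \<le> sep_sum n m f y"
proof -
  let ?p = "\<lambda>i. ip (n i) (blk n v i) (vdiff (blk n y i) (blk n x i))"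
  let ?q = "\<lambda>i. vdist (n i) (blk n y i) (blk n x i)"
  have "(\<Sum>i<m. ?q i) \<le> (\<Sum>i<m. vdist (offs n m) y x)"
    by (intro sum_mono vdist_blk_le) simp
  then have "\<epsilon> * (\<Sum>i<m. ?q i) \<le> \<epsilon> * (real m * vdist (offs n m) y x)"
    using assms(1) by (intro mult_left_mono) simp_all
  then have "sep_sum n m f x + ereal (ip (offs n m) v (vdiff y x) - \<epsilon> * (real m * vdist (offs n m) y x))
      \<le> sep_sum n m f x + ereal (\<Sum>i<m. ?p i - \<epsilon> * ?q i)"
    by (intro add_left_mono) (simp add: ip_blocks blk_vdiff sum_subtractf sum_distrib_left)
  also have "\<dots> = (\<Sum>i<m. f i (blk n x i) + ereal (?p i - \<epsilon> * ?q i))"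
    by (simp add: sep_sum_def sum.distrib)
  also have "\<dots> \<le> sep_sum n m f y"
    unfolding sep_sum_def using blk by (intro sum_mono) simp
  finally show ?thesis .
qed

lemma rsd_sep_sum_of_rsd_blk:
  assumes x: "x \<in> Rn (offs n m)" and v: "v \<in> Rn (offs n m)"
    and blk: "\<And>i. i < m \<Longrightarrow> blk n v i \<in> rsd (n i) (f i) (blk n x i)"
  shows "v \<in> rsd (offs n m) (sep_sum n m f) x"
proof -
  have fin: "\<And>i. i < m \<Longrightarrow> \<bar>f i (blk n x i)\<bar> \<noteq> \<infinity>"
    using blk by (simp add: rsd_def)
  have "\<exists>\<delta>>0. \<forall>y\<in>Rn (offs n m). vdist (offs n m) y x < \<delta> \<longrightarrow>
      sep_sum n m f x + ereal (ip (offs n m) v (vdiff y x) - \<epsilon> * vdist (offs n m) y x) \<le> sep_sum n m f y"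
    if "\<epsilon> > 0" for \<epsilon>
  proof -
    define \<epsilon>' where "\<epsilon>' = \<epsilon> / (real m + 1)"
    have "\<epsilon>' > 0" and "real m * \<epsilon>' \<le> \<epsilon>"
      using \<open>\<epsilon> > 0\<close> by (simp_all add: \<epsilon>'_def field_simps)
    have "\<forall>i<m. \<exists>\<delta>>0. \<forall>y\<in>Rn (n i). vdist (n i) y (blk n x i) < \<delta> \<longrightarrow>
        f i (blk n x i) + ereal (ip (n i) (blk n v i) (vdiff y (blk n x i)) - \<epsilon>' * vdist (n i) y (blk n x i)) \<le> f i y"
      using blk \<open>\<epsilon>' > 0\<close> unfolding rsd_def by blast
    then obtain \<delta> where \<delta>: "\<forall>i<m. \<delta> i > 0 \<and> (\<forall>y\<in>Rn (n i). vdist (n i) y (blk n x i) < \<delta> i \<longrightarrow>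
        f i (blk n x i) + ereal (ip (n i) (blk n v i) (vdiff y (blk n x i)) - \<epsilon>' * vdist (n i) y (blk n x i)) \<le> f i y)"
      by metis
    obtain d where "d > 0" and d: "\<And>i. i < m \<Longrightarrow> d \<le> \<delta> i"
      using \<delta> ex_pos_le_all[of m \<delta>] by blast
    have "sep_sum n m f x + ereal (ip (offs n m) v (vdiff y x) - \<epsilon> * vdist (offs n m) y x) \<le> sep_sum n m f y"
      if y: "vdist (offs n m) y x < d" for y
    proof -
      have "sep_sum n m f x + ereal (ip (offs n m) v (vdiff y x) - \<epsilon> * vdist (offs n m) y x)
          \<le> sep_sum n m f x + ereal (ip (offs n m) v (vdiff y x) - \<epsilon>' * (real m * vdist (offs n m) y x))"
        using mult_right_mono[OF \<open>real m * \<epsilon>' \<le> \<epsilon>\<close>, of "vdist (offs n m) y x"]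
        by (intro add_left_mono) (simp add: ac_simps)
      also have "\<dots> \<le> sep_sum n m f y"
        using \<delta> d y vdist_blk_le[of _ m n y x] \<open>\<epsilon>' > 0\<close>
        by (intro sep_sum_subgradient_estimate) force+
      finally show ?thesis .
    qed
    with \<open>d > 0\<close> show ?thesis
      by blast
  qed
  moreover have "\<bar>sep_sum n m f x\<bar> \<noteq> \<infinity>"
    using fin by (simp add: sep_sum_eq_ereal)
  ultimately show ?thesis
    using x v unfolding rsd_def by blast
qed

lemma lsc_n_eventually_less:
  assumes "lsc_n n h" "x \<in> Rn n" "c < h x"
    and "\<And>k. X k \<in> Rn n" "(\<lambda>k. vdist n (X k) x) \<longlonglongrightarrow> 0"
  shows "eventually (\<lambda>k. c < h (X k)) sequentially"
proof -
  obtain \<delta> where "\<delta> > 0" and \<delta>: "\<forall>y\<in>Rn n. vdist n y x < \<delta> \<longrightarrow> c < h y"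
    using assms(1-3) unfolding lsc_n_def by blast
  have "eventually (\<lambda>k. vdist n (X k) x < \<delta>) sequentially"
    using order_tendstoD(2)[OF assms(5) \<open>\<delta> > 0\<close>] .
  then show ?thesis
    by eventually_elim (use \<delta> assms(4) in blast)
qed

lemma tendsto_summand_of_tendsto_sum:
  fixes a :: "nat \<Rightarrow> 'i \<Rightarrow> real"
  assumes "finite A" "i \<in> A"
    and lim: "(\<lambda>k. \<Sum>j\<in>A. a k j) \<longlonglongrightarrow> (\<Sum>j\<in>A. b j)"
    and lower: "\<And>j \<eta>. j \<in> A \<Longrightarrow> \<eta> > 0 \<Longrightarrow> eventually (\<lambda>k. b j - \<eta> < a k j) sequentially"
  shows "(\<lambda>k. a k i) \<longlonglongrightarrow> b i"
  unfolding tendsto_iff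
proof (intro allI impI)
  fix \<eta> :: real
  assume "\<eta> > 0"
  define c where "c = real (card A)"
  have "c \<ge> 1"
    using assms(1,2) by (auto simp: c_def Suc_le_eq card_gt_0_iff)
  define e where "e = \<eta> / (2 * c)"
  have "e > 0" "c * e = \<eta> / 2" "e \<le> \<eta>"
    using \<open>c \<ge> 1\<close> \<open>\<eta> > 0\<close> by (auto simp: e_def field_simps)
  have "eventually (\<lambda>k. \<bar>(\<Sum>j\<in>A. a k j) - (\<Sum>j\<in>A. b j)\<bar> < \<eta> / 2) sequentially"
    using tendsto_iff[THEN iffD1, OF lim, rule_format, of "\<eta> / 2"] \<open>\<eta> > 0\<close>
    by (simp add: dist_real_def)
  moreover have "eventually (\<lambda>k. \<forall>j\<in>A. b j - e < a k j) sequentially"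
    using assms(1) lower \<open>e > 0\<close> by (intro eventually_ball_finite) auto
  ultimately show "eventually (\<lambda>k. dist (a k i) (b i) < \<eta>) sequentially"
  proof eventually_elim
    case (elim k)
    have "(\<Sum>j\<in>A - {i}. - e) \<le> (\<Sum>j\<in>A - {i}. a k j - b j)"
      using elim(2) by (intro sum_mono) (auto simp: algebra_simps)
    moreover have "real (card (A - {i})) * e \<le> c * e"
      using \<open>e > 0\<close> assms(1) by (intro mult_right_mono) (auto simp: c_def card_Diff1_le)
    ultimately have "- (\<eta> / 2) \<le> (\<Sum>j\<in>A - {i}. a k j - b j)"
      using \<open>c * e = \<eta> / 2\<close> by simp
    moreover have "(\<Sum>j\<in>A. a k j) - (\<Sum>j\<in>A. b j) = (a k i - b i) + (\<Sum>j\<in>A - {i}. a k j - b j)"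
      using assms(1,2) by (simp add: sum_subtractf[symmetric] sum.remove)
    moreover have "b i - e < a k i"
      using elim(2) assms(2) by blast
    ultimately show ?case
      using elim(1) \<open>e \<le> \<eta>\<close> unfolding dist_real_def by linarith
  qed
qed

text \<open>Lower semicontinuity is what makes the summands \<open>f i (blk n (X k) i)\<close> converge
  individually once their sum does.\<close>

lemma lsd_blk_of_lsd_sep_sum:
  assumes nm: "\<And>i. i < m \<Longrightarrow> no_minf (n i) (f i)" and lsc: "\<And>i. i < m \<Longrightarrow> lsc_n (n i) (f i)"
    and v: "v \<in> lsd (offs n m) (sep_sum n m f) x" and i: "i < m"
  shows "blk n v i \<in> lsd (n i) (f i) (blk n x i)"
proof -
  obtain X W where W: "\<And>k. W k \<in> rsd (offs n m) (sep_sum n m f) (X k)"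
    and X: "(\<lambda>k. vdist (offs n m) (X k) x) \<longlonglongrightarrow> 0"
    and F: "(\<lambda>k. sep_sum n m f (X k)) \<longlonglongrightarrow> sep_sum n m f x"
    and W_lim: "(\<lambda>k. vdist (offs n m) (W k) v) \<longlonglongrightarrow> 0"
    using v unfolding lsd_def by blast
  have fin: "\<And>j. j < m \<Longrightarrow> \<bar>f j (blk n x j)\<bar> \<noteq> \<infinity>"
    using v abs_sep_sum_neq_infinity_iff[OF nm] by (simp add: lsd_def)
  have fin_X: "\<And>j k. j < m \<Longrightarrow> \<bar>f j (blk n (X k) j)\<bar> \<noteq> \<infinity>"
    using W abs_sep_sum_neq_infinity_iff[OF nm] by (simp add: rsd_def)
  define a where "a k j = real_of_ereal (f j (blk n (X k) j))" for k j
  define b where "b j = real_of_ereal (f j (blk n x j))" for j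
  have "(\<lambda>k. ereal (\<Sum>j<m. a k j)) \<longlonglongrightarrow> ereal (\<Sum>j<m. b j)"
    using F unfolding a_def b_def by (simp add: sep_sum_eq_ereal fin fin_X)
  then have lim_sum: "(\<lambda>k. \<Sum>j\<in>{..<m}. a k j) \<longlonglongrightarrow> (\<Sum>j\<in>{..<m}. b j)"
    by simp
  have "eventually (\<lambda>k. b j - \<eta> < a k j) sequentially" if "j \<in> {..<m}" "\<eta> > 0" for j \<eta>
  proof -
    have "ereal (b j - \<eta>) < f j (blk n x j)"
      using fin[of j] that unfolding b_def by (cases "f j (blk n x j)") auto
    with lsc_n_eventually_less[OF lsc blk_in_Rn this blk_in_Rn tendsto_vdist_blk[OF X]] that
    have "eventually (\<lambda>k. ereal (b j - \<eta>) < f j (blk n (X k) j)) sequentially"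
      by simp
    then show ?thesis
      by eventually_elim (use fin_X[of j] that in \<open>auto simp: a_def ereal_less_real_iff\<close>)
  qed
  then have "(\<lambda>k. a k i) \<longlonglongrightarrow> b i"
    using i by (intro tendsto_summand_of_tendsto_sum[OF _ _ lim_sum]) auto
  then have "(\<lambda>k. f i (blk n (X k) i)) \<longlonglongrightarrow> f i (blk n x i)"
    unfolding a_def b_def using fin_X i fin by (subst tendsto_real_of_ereal_iff) auto
  moreover have "blk n (W k) i \<in> rsd (n i) (f i) (blk n (X k) i)" for k
    using rsd_blk_of_rsd_sep_sum[OF nm W i] .
  ultimately show ?thesis
    unfolding lsd_def using fin[OF i] tendsto_vdist_blk[OF X i] tendsto_vdist_blk[OF W_lim i]
    by (intro CollectI conjI blk_in_Rn exI[of _ "\<lambda>k. blk n (X k) i"] exI[of _ "\<lambda>k. blk n (W k) i"]) auto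
qed

lemma lsd_sep_sum_of_lsd_blk:
  assumes x: "x \<in> Rn (offs n m)" and v: "v \<in> Rn (offs n m)"
    and blk: "\<And>i. i < m \<Longrightarrow> blk n v i \<in> lsd (n i) (f i) (blk n x i)"
  shows "v \<in> lsd (offs n m) (sep_sum n m f) x"
proof -
  have fin: "\<And>i. i < m \<Longrightarrow> \<bar>f i (blk n x i)\<bar> \<noteq> \<infinity>"
    using blk by (simp add: lsd_def)
  have "\<forall>i<m. \<exists>xs vs. (\<forall>k. vs k \<in> rsd (n i) (f i) (xs k)) \<and>
      (\<lambda>k. vdist (n i) (xs k) (blk n x i)) \<longlonglongrightarrow> 0 \<and>
      (\<lambda>k. f i (xs k)) \<longlonglongrightarrow> f i (blk n x i) \<and>
      (\<lambda>k. vdist (n i) (vs k) (blk n v i)) \<longlonglongrightarrow> 0"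
    using blk unfolding lsd_def by blast
  then obtain XS VS where seq: "\<forall>i<m. (\<forall>k. VS i k \<in> rsd (n i) (f i) (XS i k)) \<and>
      (\<lambda>k. vdist (n i) (XS i k) (blk n x i)) \<longlonglongrightarrow> 0 \<and>
      (\<lambda>k. f i (XS i k)) \<longlonglongrightarrow> f i (blk n x i) \<and>
      (\<lambda>k. vdist (n i) (VS i k) (blk n v i)) \<longlonglongrightarrow> 0"
    by metis
  define X where "X k = concat_blocks n m (\<lambda>i. XS i k)" for k
  define W where "W k = concat_blocks n m (\<lambda>i. VS i k)" for k
  have blk_X: "blk n (X k) i = XS i k" and blk_W: "blk n (W k) i = VS i k"
    and fin_X: "\<bar>f i (blk n (X k) i)\<bar> \<noteq> \<infinity>" if "i < m" for i k
    using seq that unfolding X_def W_def rsd_def by (auto simp: blk_concat_blocks)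
  have "X k \<in> Rn (offs n m)" "W k \<in> Rn (offs n m)" for k
    by (simp_all add: X_def W_def)
  then have "W k \<in> rsd (offs n m) (sep_sum n m f) (X k)" for k
    using seq by (intro rsd_sep_sum_of_rsd_blk) (auto simp: blk_X blk_W)
  moreover have "(\<lambda>k. vdist (offs n m) (X k) x) \<longlonglongrightarrow> 0" "(\<lambda>k. vdist (offs n m) (W k) v) \<longlonglongrightarrow> 0"
    using seq by (auto intro!: tendsto_vdist_of_blocks simp: blk_X blk_W)
  moreover have "(\<lambda>k. sep_sum n m f (X k)) \<longlonglongrightarrow> sep_sum n m f x"
  proof -
    have "(\<lambda>k. real_of_ereal (f i (blk n (X k) i))) \<longlonglongrightarrow> real_of_ereal (f i (blk n x i))"
      if "i < m" for i
      using seq that fin_X[OF that] fin[OF that] by (simp add: blk_X tendsto_real_of_ereal_iff[symmetric])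
    then have "(\<lambda>k. \<Sum>i<m. real_of_ereal (f i (blk n (X k) i))) \<longlonglongrightarrow> (\<Sum>i<m. real_of_ereal (f i (blk n x i)))"
      by (intro tendsto_sum) auto
    then show ?thesis
      by (simp add: sep_sum_eq_ereal fin fin_X)
  qed
  ultimately show ?thesis
    using x v fin unfolding lsd_def by (auto simp: sep_sum_eq_ereal)
qed

lemma lsd_in_Rn: "v \<in> lsd n h x \<Longrightarrow> v \<in> Rn n"
  by (simp add: lsd_def)

lemma ereal_real_of_lsd: "v \<in> lsd n h x \<Longrightarrow> ereal (real_of_ereal (h x)) = h x"
  by (cases "h x") (auto simp: lsd_def)

lemma lsd_sep_sum_iff:
  assumes "\<And>i. i < m \<Longrightarrow> no_minf (n i) (f i)" "\<And>i. i < m \<Longrightarrow> lsc_n (n i) (f i)"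
    and "x \<in> Rn (offs n m)"
  shows "v \<in> lsd (offs n m) (sep_sum n m f) x \<longleftrightarrow>
    v \<in> Rn (offs n m) \<and> (\<forall>i<m. blk n v i \<in> lsd (n i) (f i) (blk n x i))"
  using lsd_blk_of_lsd_sep_sum[where n = n and f = f and m = m, OF assms(1,2)]
    lsd_sep_sum_of_lsd_blk[OF assms(3)] lsd_in_Rn
  by blast

section \<open>Semicontinuity and convexity of sums\<close>

lemma lsc_n_blk:
  assumes "i < m" "lsc_n (n i) h"
  shows "lsc_n (offs n m) (\<lambda>x. h (blk n x i))"
  unfolding lsc_n_def
proof (intro ballI allI impI)
  fix x c
  assume "c < h (blk n x i)"
  then obtain \<delta> where "\<delta> > 0" and \<delta>: "\<forall>y\<in>Rn (n i). vdist (n i) y (blk n x i) < \<delta> \<longrightarrow> c < h y"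
    using assms(2) unfolding lsc_n_def by (meson blk_in_Rn)
  have "c < h (blk n y i)" if "vdist (offs n m) y x < \<delta>" for y
    using \<delta> vdist_blk_le[OF assms(1), of n y x] that by simp
  with \<open>\<delta> > 0\<close> show "\<exists>\<delta>>0. \<forall>y\<in>Rn (offs n m). vdist (offs n m) y x < \<delta> \<longrightarrow> c < h (blk n y i)"
    by blast
qed

lemma convex_fn_n_blk: "convex_fn_n (n i) h \<Longrightarrow> convex_fn_n N (\<lambda>x. h (blk n x i))"
  unfolding convex_fn_n_def blk_vcomb by simp

lemma ereal_less_add_split:
  assumes "ereal r < a + b" "a \<noteq> -\<infinity>" "b \<noteq> -\<infinity>"
  obtains r1 r2 where "ereal r1 < a" "ereal r2 < b" "r = r1 + r2"
proof (cases a; cases b)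
  fix p q
  assume "a = ereal p" "b = ereal q"
  with assms(1) show thesis
    by (intro that[of "p - (p + q - r) / 2" "q - (p + q - r) / 2"]) auto
next
  fix p
  assume "a = ereal p" "b = \<infinity>"
  then show thesis
    by (intro that[of "p - 1" "r - p + 1"]) auto
next
  fix q
  assume "a = \<infinity>" "b = ereal q"
  then show thesis
    by (intro that[of "r - q + 1" "q - 1"]) auto
next
  assume "a = \<infinity>" "b = \<infinity>"
  then show thesis
    by (intro that[of r 0]) auto
qed (use assms in auto)

lemma lsc_n_add:
  assumes "lsc_n N g" "no_minf N g" "lsc_n N h" "no_minf N h"
  shows "lsc_n N (\<lambda>x. g x + h x)"
  unfolding lsc_n_def
proof (intro ballI allI impI)
  fix x c
  assume x: "x \<in> Rn N" and c: "c < g x + h x"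
  show "\<exists>\<delta>>0. \<forall>y\<in>Rn N. vdist N y x < \<delta> \<longrightarrow> c < g y + h y"
  proof (cases c)
    case MInf
    have "g y + h y \<noteq> -\<infinity>" if "y \<in> Rn N" for y
      using assms(2,4) that unfolding no_minf_def by (cases "g y"; cases "h y") auto
    then show ?thesis
      using MInf by (intro exI[of _ 1]) auto
  next
    case (real r)
    obtain r1 r2 where "ereal r1 < g x" "ereal r2 < h x" and r: "r = r1 + r2"
      using ereal_less_add_split[of r "g x" "h x"] c real assms(2,4) x unfolding no_minf_def by blast
    then obtain \<delta>1 \<delta>2 where "\<delta>1 > 0" "\<forall>y\<in>Rn N. vdist N y x < \<delta>1 \<longrightarrow> ereal r1 < g y"
      and "\<delta>2 > 0" "\<forall>y\<in>Rn N. vdist N y x < \<delta>2 \<longrightarrow> ereal r2 < h y"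
      using assms(1,3) x unfolding lsc_n_def by meson
    then show ?thesis
      using real r ereal_add_strict_mono2[of "ereal r1" _ "ereal r2"]
      by (intro exI[of _ "min \<delta>1 \<delta>2"]) auto
  qed (use c in simp)
qed

lemma no_minf_sum: "(\<And>i. i < (k::nat) \<Longrightarrow> no_minf N (g i)) \<Longrightarrow> no_minf N (\<lambda>x. \<Sum>i<k. g i x)"
  unfolding no_minf_def by (auto intro!: sum_neq_minf)

lemma lsc_n_sum:
  assumes "\<And>i. i < (k::nat) \<Longrightarrow> lsc_n N (g i)" "\<And>i. i < k \<Longrightarrow> no_minf N (g i)"
  shows "lsc_n N (\<lambda>x. \<Sum>i<k. g i x)"
  using assms
proof (induction k)
  case 0
  show ?case
    by (auto simp: lsc_n_def intro: exI[of _ 1])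
next
  case (Suc k)
  then show ?case
    by (simp add: lsc_n_add no_minf_sum)
qed

lemma convex_fn_n_add:
  assumes "convex_fn_n N g" "no_minf N g" "convex_fn_n N h" "no_minf N h"
  shows "convex_fn_n N (\<lambda>x. g x + h x)"
  unfolding convex_fn_n_def
proof (intro ballI)
  fix x y t
  assume xy: "x \<in> Rn N" "y \<in> Rn N" and t: "t \<in> {0<..<1::real}"
  have "g (vcomb t x y) + h (vcomb t x y)
      \<le> (ereal t * g x + ereal (1 - t) * g y) + (ereal t * h x + ereal (1 - t) * h y)"
    using assms(1,3) xy t unfolding convex_fn_n_def by (intro add_mono) auto
  also have "\<dots> = ereal t * (g x + h x) + ereal (1 - t) * (g y + h y)"
    using assms(2,4) xy t unfolding no_minf_def
    by (cases "g x"; cases "g y"; cases "h x"; cases "h y") (auto simp: algebra_simps)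
  finally show "g (vcomb t x y) + h (vcomb t x y) \<le> ereal t * (g x + h x) + ereal (1 - t) * (g y + h y)" .
qed

lemma convex_fn_n_sum:
  assumes "\<And>i. i < (k::nat) \<Longrightarrow> convex_fn_n N (g i)" "\<And>i. i < k \<Longrightarrow> no_minf N (g i)"
  shows "convex_fn_n N (\<lambda>x. \<Sum>i<k. g i x)"
  using assms
proof (induction k)
  case 0
  show ?case
    by (simp add: convex_fn_n_def)
next
  case (Suc k)
  then show ?case
    by (simp add: convex_fn_n_add no_minf_sum)
qed

lemma sep_sum_eq: "sep_sum n m f = (\<lambda>x. \<Sum>i<m. f i (blk n x i))"
  by (simp add: sep_sum_def fun_eq_iff)

lemma no_minf_sep_sum:
  "(\<And>i. i < m \<Longrightarrow> no_minf (n i) (f i)) \<Longrightarrow> no_minf (offs n m) (sep_sum n m f)"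
  unfolding sep_sum_eq by (intro no_minf_sum) (simp add: no_minf_def)

lemma lsc_n_sep_sum:
  "(\<And>i. i < m \<Longrightarrow> lsc_n (n i) (f i)) \<Longrightarrow> (\<And>i. i < m \<Longrightarrow> no_minf (n i) (f i))
    \<Longrightarrow> lsc_n (offs n m) (sep_sum n m f)"
  unfolding sep_sum_eq by (intro lsc_n_sum lsc_n_blk) (auto simp: no_minf_def)

lemma convex_fn_n_sep_sum:
  "(\<And>i. i < m \<Longrightarrow> convex_fn_n (n i) (f i)) \<Longrightarrow> (\<And>i. i < m \<Longrightarrow> no_minf (n i) (f i))
    \<Longrightarrow> convex_fn_n (offs n m) (sep_sum n m f)"
  unfolding sep_sum_eq by (intro convex_fn_n_sum convex_fn_n_blk) (auto simp: no_minf_def)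

section \<open>Subgradient inequality of convex functions\<close>

lemma le_of_le_add_mult_epsilon:
  fixes a b c :: real
  assumes "\<And>\<epsilon>. \<epsilon> > 0 \<Longrightarrow> a \<le> b + \<epsilon> * c" "c \<ge> 0"
  shows "a \<le> b"
proof (rule field_le_epsilon)
  fix e :: real
  assume "e > 0"
  then have "a \<le> b + e / (c + 1) * c"
    using assms by (intro assms(1)) (simp add: add_nonneg_pos)
  also have "\<dots> \<le> b + e"
    using \<open>e > 0\<close> \<open>c \<ge> 0\<close> by (simp add: field_simps)
  finally show "a \<le> b + e" .
qed

lemma ex_unit_step_mult_less:
  fixes \<delta> D :: real
  assumes "\<delta> > 0" "D \<ge> 0"
  obtains t where "0 < t" "t < 1" "t * D < \<delta>"
proof
  let ?t = "min (1 / 2) (\<delta> / (D + 1))"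
  show "0 < ?t" "?t < 1"
    using assms by auto
  have "?t * D \<le> \<delta> / (D + 1) * D"
    using assms(2) by (intro mult_right_mono) auto
  also have "\<dots> < \<delta>"
    using assms by (simp add: field_simps)
  finally show "?t * D < \<delta>" .
qed

text \<open>For convex \<open>\<phi>\<close> a regular subgradient is a global one: comparing the local
  subgradient estimate at \<open>x + t (y - x)\<close> with the convexity bound there gives
  \<open>\<phi> x + \<langle>v, y - x\<rangle> \<le> \<phi> y + \<epsilon> \<parallel>y - x\<parallel>\<close> for every \<open>\<epsilon> > 0\<close>.\<close>

lemma rsd_convex_subgradient_ineq:
  assumes conv: "convex_fn_n n \<phi>" and nm: "no_minf n \<phi>" and v: "v \<in> rsd n \<phi> x" and y: "y \<in> Rn n"
  shows "\<phi> x + ereal (ip n v (vdiff y x)) \<le> \<phi> y"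
proof (cases "\<phi> y")
  case MInf
  then show ?thesis
    using nm y by (simp add: no_minf_def)
next
  case PInf
  then show ?thesis
    by simp
next
  case (real Q)
  have x: "x \<in> Rn n" and "\<bar>\<phi> x\<bar> \<noteq> \<infinity>"
    using v by (auto simp: rsd_def)
  then obtain P where P: "\<phi> x = ereal P"
    by (cases "\<phi> x") auto
  define I D where "I = ip n v (vdiff y x)" and "D = vdist n y x"
  have "D \<ge> 0"
    by (simp add: D_def)
  have "P + I \<le> Q + \<epsilon> * D" if "\<epsilon> > 0" for \<epsilon>
  proof -
    obtain \<delta> where "\<delta> > 0" and \<delta>: "\<forall>z\<in>Rn n. vdist n z x < \<delta> \<longrightarrow>
        \<phi> x + ereal (ip n v (vdiff z x) - \<epsilon> * vdist n z x) \<le> \<phi> z"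
      using v \<open>\<epsilon> > 0\<close> unfolding rsd_def by blast
    obtain t where "0 < t" "t < 1" "t * D < \<delta>"
      using ex_unit_step_mult_less[OF \<open>\<delta> > 0\<close> \<open>D \<ge> 0\<close>] .
    let ?z = "vcomb t y x"
    have "ereal (P + (t * I - \<epsilon> * (t * D))) \<le> \<phi> ?z"
      using \<delta>[rule_format, of ?z] x y \<open>t * D < \<delta>\<close> \<open>0 < t\<close> P
      by (simp add: vcomb_in_Rn vdist_vcomb_left vdiff_vcomb_left ip_scale_right I_def D_def)
    also have "\<phi> ?z \<le> ereal (t * Q + (1 - t) * P)"
      using conv x y \<open>0 < t\<close> \<open>t < 1\<close> P real unfolding convex_fn_n_def by force
    finally have "t * (P + I) \<le> t * (Q + \<epsilon> * D)"
      by (simp add: algebra_simps)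
    then show ?thesis
      using \<open>0 < t\<close> by simp
  qed
  then have "P + I \<le> Q"
    using \<open>D \<ge> 0\<close> by (rule le_of_le_add_mult_epsilon)
  then show ?thesis
    using P real by (simp add: I_def)
qed

lemma lsd_convex_subgradient_ineq:
  assumes conv: "convex_fn_n n \<phi>" and nm: "no_minf n \<phi>" and v: "v \<in> lsd n \<phi> x" and y: "y \<in> Rn n"
  shows "\<phi> x + ereal (ip n v (vdiff y x)) \<le> \<phi> y"
proof (cases "\<phi> y")
  case MInf
  then show ?thesis
    using nm y by (simp add: no_minf_def)
next
  case PInf
  then show ?thesis
    by simp
next
  case (real Q)
  have fin: "\<bar>\<phi> x\<bar> \<noteq> \<infinity>"
    using v by (simp add: lsd_def)
  obtain X W where W: "\<And>k. W k \<in> rsd n \<phi> (X k)"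
    and X: "(\<lambda>k. vdist n (X k) x) \<longlonglongrightarrow> 0"
    and F: "(\<lambda>k. \<phi> (X k)) \<longlonglongrightarrow> \<phi> x"
    and W_lim: "(\<lambda>k. vdist n (W k) v) \<longlonglongrightarrow> 0"
    using v unfolding lsd_def by blast
  have fin_X: "\<bar>\<phi> (X k)\<bar> \<noteq> \<infinity>" for k
    using W[of k] by (simp add: rsd_def)
  have "(\<lambda>k. real_of_ereal (\<phi> (X k))) \<longlonglongrightarrow> real_of_ereal (\<phi> x)"
    using F fin_X fin by (simp add: tendsto_real_of_ereal_iff)
  moreover have "(\<lambda>k. ip n (W k) (vdiff y (X k))) \<longlonglongrightarrow> ip n v (vdiff y x)"
    unfolding ip_def vdiff_def
    by (intro tendsto_intros tendsto_coord_of_vdist[OF W_lim] tendsto_coord_of_vdist[OF X]) auto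
  moreover have "real_of_ereal (\<phi> (X k)) + ip n (W k) (vdiff y (X k)) \<le> Q" for k
    using rsd_convex_subgradient_ineq[OF conv nm W[of k] y] real fin_X[of k]
    by (cases "\<phi> (X k)") auto
  ultimately have "real_of_ereal (\<phi> x) + ip n v (vdiff y x) \<le> Q"
    by (intro tendsto_le[OF _ tendsto_const tendsto_add]) auto
  then show ?thesis
    using real fin by (cases "\<phi> x") auto
qed

section \<open>Witnesses of variational convexity\<close>

definition var_convex_witness ::
  "nat \<Rightarrow> ((nat \<Rightarrow> real) \<Rightarrow> ereal) \<Rightarrow> (nat \<Rightarrow> real) \<Rightarrow> (nat \<Rightarrow> real)
    \<Rightarrow> (nat \<Rightarrow> real) set \<Rightarrow> (nat \<Rightarrow> real) set \<Rightarrow> ((nat \<Rightarrow> real) \<Rightarrow> ereal) \<Rightarrow> real \<Rightarrow> bool"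
  where "var_convex_witness n h xb vb U V \<phi> \<epsilon> \<longleftrightarrow>
    convex_set_n n U \<and> convex_set_n n V \<and> nhd_n n U xb \<and> nhd_n n V vb \<and>
    lsc_n n \<phi> \<and> no_minf n \<phi> \<and> convex_fn_n n \<phi> \<and> (\<forall>x\<in>U. \<phi> x \<le> h x) \<and> \<epsilon> > 0 \<and>
    {(x, v). x \<in> U \<and> h x < h xb + ereal \<epsilon> \<and> v \<in> V \<and> v \<in> lsd n h x}
      = {(x, v). x \<in> U \<and> v \<in> V \<and> v \<in> lsd n \<phi> x} \<and>
    (\<forall>x v. x \<in> U \<and> v \<in> V \<and> v \<in> lsd n \<phi> x \<longrightarrow> h x = \<phi> x)"

lemma var_convex_iff_witness:
  "var_convex n h xb vb \<longleftrightarrow> vb \<in> lsd n h xb \<and> (\<exists>U V \<phi> \<epsilon>. var_convex_witness n h xb vb U V \<phi> \<epsilon>)"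
  unfolding var_convex_def var_convex_witness_def by simp

lemma var_convex_witness_graph_iff:
  assumes "var_convex_witness n h xb vb U V \<phi> \<epsilon>" "x \<in> U" "v \<in> V"
  shows "h x < h xb + ereal \<epsilon> \<and> v \<in> lsd n h x \<longleftrightarrow> v \<in> lsd n \<phi> x"
proof -
  have "{(x, v). x \<in> U \<and> h x < h xb + ereal \<epsilon> \<and> v \<in> V \<and> v \<in> lsd n h x}
      = {(x, v). x \<in> U \<and> v \<in> V \<and> v \<in> lsd n \<phi> x}"
    using assms(1) by (simp add: var_convex_witness_def)
  then have "(x, v) \<in> {(x, v). x \<in> U \<and> h x < h xb + ereal \<epsilon> \<and> v \<in> V \<and> v \<in> lsd n h x}
      \<longleftrightarrow> (x, v) \<in> {(x, v). x \<in> U \<and> v \<in> V \<and> v \<in> lsd n \<phi> x}"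
    by simp
  then show ?thesis
    using assms(2,3) by simp
qed

lemma var_convex_witness_eq:
  "var_convex_witness n h xb vb U V \<phi> \<epsilon> \<Longrightarrow> x \<in> U \<Longrightarrow> v \<in> V \<Longrightarrow> v \<in> lsd n \<phi> x \<Longrightarrow> h x = \<phi> x"
  unfolding var_convex_witness_def by blast

lemma var_convex_witness_restrict:
  assumes w: "var_convex_witness n h xb vb U0 V0 \<phi> \<epsilon>" and "U \<subseteq> U0" "V \<subseteq> V0"
    and "convex_set_n n U" "convex_set_n n V" "nhd_n n U xb" "nhd_n n V vb"
  shows "var_convex_witness n h xb vb U V \<phi> \<epsilon>"
proof -
  have "{(x, v). x \<in> U \<and> h x < h xb + ereal \<epsilon> \<and> v \<in> V \<and> v \<in> lsd n h x}
      = {(x, v). x \<in> U \<and> v \<in> V \<and> v \<in> lsd n \<phi> x}"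
    using var_convex_witness_graph_iff[OF w] assms(2,3) by blast
  then show ?thesis
    using assms var_convex_witness_eq[OF w] unfolding var_convex_witness_def by blast
qed

lemma var_convex_witness_at_base:
  assumes w: "var_convex_witness n h xb vb U V \<phi> \<epsilon>" and vb: "vb \<in> lsd n h xb"
  shows "\<phi> xb = h xb"
proof -
  have "xb \<in> U" "vb \<in> V" "\<epsilon> > 0"
    using w by (auto simp: var_convex_witness_def nhd_n_center)
  moreover have "\<bar>h xb\<bar> \<noteq> \<infinity>"
    using vb by (simp add: lsd_def)
  then have "h xb < h xb + ereal \<epsilon>"
    using \<open>\<epsilon> > 0\<close> by (cases "h xb") auto
  ultimately show ?thesis
    using vb var_convex_witness_graph_iff[OF w] var_convex_witness_eq[OF w] by metis
qed

lemma var_convex_witness_graph_le: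
  assumes w: "var_convex_witness n h xb vb U V \<phi> \<epsilon>" and vb: "vb \<in> lsd n h xb"
    and "x \<in> U" "v \<in> V" and v: "v \<in> lsd n \<phi> x"
  shows "h x \<le> h xb + ereal (L2_set v {..<n} * vdist n x xb)"
proof -
  have "convex_fn_n n \<phi>" "no_minf n \<phi>"
    using w by (simp_all add: var_convex_witness_def)
  moreover have "xb \<in> Rn n"
    using vb by (simp add: lsd_def)
  ultimately have "\<phi> x + ereal (ip n v (vdiff xb x)) \<le> h xb"
    using lsd_convex_subgradient_ineq[OF _ _ v] var_convex_witness_at_base[OF w vb] by metis
  moreover have "- ip n v (vdiff xb x) \<le> L2_set v {..<n} * vdist n x xb"
    using abs_ip_le_L2_set[of n v "vdiff xb x"] by (simp add: vdist_eq_L2_set[symmetric] vdist_commute)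
  moreover have "\<bar>\<phi> x\<bar> \<noteq> \<infinity>"
    using v by (simp add: lsd_def)
  moreover have "h x = \<phi> x"
    using var_convex_witness_eq[OF w] assms(3-5) by blast
  ultimately show ?thesis
    by (cases "\<phi> x"; cases "h xb") auto
qed

lemma var_convex_witness_localize:
  assumes w: "var_convex_witness n h xb vb U0 V0 \<phi> \<epsilon>" and vb: "vb \<in> lsd n h xb"
    and lsc: "lsc_n n h" and "\<eta> > 0"
  obtains U V where "var_convex_witness n h xb vb U V \<phi> \<epsilon>"
    "\<forall>x\<in>U. h xb - ereal \<eta> < h x"
    "\<forall>x\<in>U. \<forall>v\<in>V. v \<in> lsd n \<phi> x \<longrightarrow> h x < h xb + ereal \<eta>"
proof -
  have xb: "xb \<in> Rn n" and "\<bar>h xb\<bar> \<noteq> \<infinity>"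
    using vb by (auto simp: lsd_def)
  then obtain hb where hb: "h xb = ereal hb"
    by (cases "h xb") auto
  then have "ereal (hb - \<eta>) < h xb"
    using \<open>\<eta> > 0\<close> by simp
  then obtain d where "d > 0" and d: "\<forall>y\<in>Rn n. vdist n y xb < d \<longrightarrow> ereal (hb - \<eta>) < h y"
    using lsc xb unfolding lsc_n_def by blast
  define c where "c = L2_set vb {..<n} + 1"
  have "c > 0"
    by (simp add: c_def add_nonneg_pos)
  define r where "r = min d (\<eta> / (2 * c))"
  define U where "U = U0 \<inter> {y \<in> Rn n. vdist n y xb < r}"
  define V where "V = V0 \<inter> {y \<in> Rn n. vdist n y vb < 1}"
  have "r > 0"
    using \<open>d > 0\<close> \<open>\<eta> > 0\<close> \<open>c > 0\<close> by (simp add: r_def)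
  have w': "var_convex_witness n h xb vb U V \<phi> \<epsilon>"
    unfolding U_def V_def using w \<open>r > 0\<close>
    by (intro var_convex_witness_restrict[OF w] convex_set_n_Int convex_set_n_ball nhd_n_Int_ball)
      (auto simp: var_convex_witness_def)
  moreover have "\<forall>x\<in>U. h xb - ereal \<eta> < h x"
    using d hb by (auto simp: U_def r_def)
  moreover have "h x < h xb + ereal \<eta>" if "x \<in> U" "v \<in> V" "v \<in> lsd n \<phi> x" for x v
  proof -
    have "L2_set v {..<n} * vdist n x xb \<le> c * (\<eta> / (2 * c))"
      using that(1,2) L2_set_le_add_vdist[of v n vb]
      by (intro mult_mono) (auto simp: U_def V_def r_def c_def)
    also have "\<dots> < \<eta>"
      using \<open>c > 0\<close> \<open>\<eta> > 0\<close> by simp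
    finally show ?thesis
      using var_convex_witness_graph_le[OF w' vb that] hb by (cases "h x") auto
  qed
  ultimately show ?thesis
    using that by blast
qed

lemma summand_less_of_sum_less:
  fixes a b :: "nat \<Rightarrow> real"
  assumes "\<And>j. j < m \<Longrightarrow> b j - \<eta> < a j" "(\<Sum>j<m. a j) < (\<Sum>j<m. b j) + c" "i < m" "\<eta> > 0"
  shows "a i < b i + c + real m * \<eta>"
proof -
  have "(\<Sum>j\<in>{..<m} - {i}. - \<eta>) \<le> (\<Sum>j\<in>{..<m} - {i}. a j - b j)"
    using assms(1) by (intro sum_mono) (auto simp: algebra_simps less_imp_le)
  moreover have "real (card ({..<m} - {i})) * \<eta> \<le> real m * \<eta>"
    using assms(4) card_Diff1_le[of "{..<m}" i] by (intro mult_right_mono) auto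
  moreover have "(\<Sum>j<m. a j) - (\<Sum>j<m. b j) = (a i - b i) + (\<Sum>j\<in>{..<m} - {i}. a j - b j)"
    using assms(3) by (simp add: sum_subtractf[symmetric] sum.remove)
  ultimately show ?thesis
    using assms(2) by simp
qed

lemma sum_less_of_summands_less:
  fixes a b :: "nat \<Rightarrow> real"
  assumes "\<And>j. j < m \<Longrightarrow> a j < b j + \<eta>" "\<eta> > 0"
  shows "(\<Sum>j<m. a j) < (\<Sum>j<m. b j) + (real m + 1) * \<eta>"
proof -
  have "(\<Sum>j<m. a j) \<le> (\<Sum>j<m. b j + \<eta>)"
    using assms(1) by (intro sum_mono) (simp add: less_imp_le)
  then show ?thesis
    using assms(2) by (simp add: sum.distrib algebra_simps)
qed

text \<open>At level \<open>(m + 1) \<eta>\<close> for the sum, a point of its level set satisfies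
  \<open>f i (x i) < f i (xb i) + (2 m + 1) \<eta> \<le> f i (xb i) + \<epsilon> i\<close> in every block, since the
  other blocks lie less than \<open>\<eta>\<close> below their base values; conversely the blockwise upper
  bounds \<open>\<eta>\<close> add up to less than \<open>(m + 1) \<eta>\<close>.\<close>

context
  fixes n :: "nat \<Rightarrow> nat" and m :: nat and f \<phi> :: "nat \<Rightarrow> (nat \<Rightarrow> real) \<Rightarrow> ereal"
    and xb vb :: "nat \<Rightarrow> nat \<Rightarrow> real" and U V :: "nat \<Rightarrow> (nat \<Rightarrow> real) set"
    and \<epsilon> :: "nat \<Rightarrow> real" and \<eta> :: real
  assumes nm: "\<And>i. i < m \<Longrightarrow> no_minf (n i) (f i)"
    and lsc: "\<And>i. i < m \<Longrightarrow> lsc_n (n i) (f i)"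
    and witness: "\<And>i. i < m \<Longrightarrow> var_convex_witness (n i) (f i) (xb i) (vb i) (U i) (V i) (\<phi> i) (\<epsilon> i)"
    and \<eta>: "\<eta> > 0" "\<And>i. i < m \<Longrightarrow> (2 * real m + 1) * \<eta> \<le> \<epsilon> i"
    and lower: "\<And>i x. i < m \<Longrightarrow> x \<in> U i \<Longrightarrow> f i (xb i) - ereal \<eta> < f i x"
    and upper: "\<And>i x v. i < m \<Longrightarrow> x \<in> U i \<Longrightarrow> v \<in> V i \<Longrightarrow> v \<in> lsd (n i) (\<phi> i) x
      \<Longrightarrow> f i x < f i (xb i) + ereal \<eta>"
begin

private lemma minorant_props:
  "i < m \<Longrightarrow> no_minf (n i) (\<phi> i) \<and> lsc_n (n i) (\<phi> i) \<and> convex_fn_n (n i) (\<phi> i)"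
  using witness by (simp add: var_convex_witness_def)

private lemma xb_in_U: "i < m \<Longrightarrow> xb i \<in> U i"
  using witness nhd_n_center unfolding var_convex_witness_def by blast

private lemma blk_concat_xb: "i < m \<Longrightarrow> blk n (concat_blocks n m xb) i = xb i"
  using witness by (intro blk_concat_blocks) (auto simp: var_convex_witness_def nhd_n_def)

text \<open>The lower bound at \<open>xb i\<close> itself forces \<open>f i (xb i)\<close> to be finite.\<close>

private lemma f_xb_finite: "i < m \<Longrightarrow> f i (xb i) = ereal (real_of_ereal (f i (xb i)))"
  using lower[OF _ xb_in_U, of i] by (cases "f i (xb i)") auto

lemma lsd_sep_sum_minorant_of_lsd_sep_sum:
  assumes x: "x \<in> block_prod n m U" and v: "v \<in> block_prod n m V"
    and level: "sep_sum n m f x < sep_sum n m f (concat_blocks n m xb) + ereal ((real m + 1) * \<eta>)"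
    and lsd: "v \<in> lsd (offs n m) (sep_sum n m f) x"
  shows "v \<in> lsd (offs n m) (sep_sum n m \<phi>) x"
proof -
  have xR: "x \<in> Rn (offs n m)"
    using x by (simp add: block_prod_def)
  have lsd_blk: "\<And>i. i < m \<Longrightarrow> blk n v i \<in> lsd (n i) (f i) (blk n x i)" and "v \<in> Rn (offs n m)"
    using lsd lsd_sep_sum_iff[OF nm lsc xR] by auto
  define a b where "a i = real_of_ereal (f i (blk n x i))" and "b i = real_of_ereal (f i (xb i))" for i
  have fx: "f i (blk n x i) = ereal (a i)" and fxb: "f i (xb i) = ereal (b i)" if "i < m" for i
    using ereal_real_of_lsd[OF lsd_blk[OF that], symmetric] f_xb_finite[OF that]
    by (simp_all add: a_def b_def)
  have "sep_sum n m f x = (\<Sum>i<m. ereal (a i))"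
    unfolding sep_sum_def by (intro sum.cong) (simp_all add: fx)
  moreover have "sep_sum n m f (concat_blocks n m xb) = (\<Sum>i<m. ereal (b i))"
    unfolding sep_sum_def by (intro sum.cong) (simp_all add: fxb blk_concat_xb)
  ultimately have "(\<Sum>i<m. a i) < (\<Sum>i<m. b i) + (real m + 1) * \<eta>"
    using level by simp
  moreover have "b i - \<eta> < a i" if "i < m" for i
    using lower[OF that, of "blk n x i"] x that by (simp add: block_prod_def fx fxb)
  ultimately have a_less: "a i < b i + (real m + 1) * \<eta> + real m * \<eta>" if "i < m" for i
    using that \<eta>(1) by (intro summand_less_of_sum_less)
  have level_blk: "f i (blk n x i) < f i (xb i) + ereal (\<epsilon> i)" if "i < m" for i
    using a_less[OF that] \<eta>(2)[OF that] by (simp add: fx fxb that algebra_simps)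
  have "blk n v i \<in> lsd (n i) (\<phi> i) (blk n x i)" if "i < m" for i
  proof -
    have "blk n x i \<in> U i" "blk n v i \<in> V i"
      using x v that by (simp_all add: block_prod_def)
    then show ?thesis
      using var_convex_witness_graph_iff[OF witness[OF that]] level_blk[OF that] lsd_blk[OF that] by blast
  qed
  then show ?thesis
    using lsd_sep_sum_iff[OF _ _ xR] minorant_props \<open>v \<in> Rn (offs n m)\<close> by blast
qed

lemma lsd_sep_sum_of_lsd_sep_sum_minorant:
  assumes x: "x \<in> block_prod n m U" and v: "v \<in> block_prod n m V"
    and lsd: "v \<in> lsd (offs n m) (sep_sum n m \<phi>) x"
  shows "sep_sum n m f x < sep_sum n m f (concat_blocks n m xb) + ereal ((real m + 1) * \<eta>)"
    and "v \<in> lsd (offs n m) (sep_sum n m f) x"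
    and "sep_sum n m f x = sep_sum n m \<phi> x"
proof -
  have xR: "x \<in> Rn (offs n m)"
    using x by (simp add: block_prod_def)
  have "v \<in> Rn (offs n m) \<and> (\<forall>i<m. blk n v i \<in> lsd (n i) (\<phi> i) (blk n x i))"
    using lsd lsd_sep_sum_iff[OF _ _ xR] minorant_props by blast
  then have "v \<in> Rn (offs n m)" and lsd_blk: "\<And>i. i < m \<Longrightarrow> blk n v i \<in> lsd (n i) (\<phi> i) (blk n x i)"
    by auto
  have blk_x: "blk n x i \<in> U i" and blk_v: "blk n v i \<in> V i" if "i < m" for i
    using x v that by (simp_all add: block_prod_def)
  have lsd_f: "blk n v i \<in> lsd (n i) (f i) (blk n x i)"
    and eq: "f i (blk n x i) = \<phi> i (blk n x i)"
    and up: "f i (blk n x i) < f i (xb i) + ereal \<eta>" if "i < m" for i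
    using var_convex_witness_graph_iff[OF witness[OF that] blk_x[OF that] blk_v[OF that]]
      var_convex_witness_eq[OF witness[OF that] blk_x[OF that] blk_v[OF that]]
      upper[OF that blk_x[OF that] blk_v[OF that]] lsd_blk[OF that]
    by auto
  show "v \<in> lsd (offs n m) (sep_sum n m f) x"
    using lsd_sep_sum_iff[OF nm lsc xR] lsd_f \<open>v \<in> Rn (offs n m)\<close> by blast
  show "sep_sum n m f x = sep_sum n m \<phi> x"
    unfolding sep_sum_def using eq by (intro sum.cong) auto
  define a b where "a i = real_of_ereal (f i (blk n x i))" and "b i = real_of_ereal (f i (xb i))" for i
  have fx: "f i (blk n x i) = ereal (a i)" and fxb: "f i (xb i) = ereal (b i)" if "i < m" for i
    using ereal_real_of_lsd[OF lsd_f[OF that], symmetric] f_xb_finite[OF that]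
    by (simp_all add: a_def b_def)
  have "sep_sum n m f x = (\<Sum>i<m. ereal (a i))"
    unfolding sep_sum_def by (intro sum.cong) (simp_all add: fx)
  moreover have "sep_sum n m f (concat_blocks n m xb) = (\<Sum>i<m. ereal (b i))"
    unfolding sep_sum_def by (intro sum.cong) (simp_all add: fxb blk_concat_xb)
  moreover have "(\<Sum>i<m. a i) < (\<Sum>i<m. b i) + (real m + 1) * \<eta>"
    using up \<eta>(1) by (intro sum_less_of_summands_less) (simp add: fx fxb)
  ultimately show "sep_sum n m f x < sep_sum n m f (concat_blocks n m xb) + ereal ((real m + 1) * \<eta>)"
    by simp
qed

lemma var_convex_witness_sep_sum:
  "var_convex_witness (offs n m) (sep_sum n m f) (concat_blocks n m xb) (concat_blocks n m vb)
    (block_prod n m U) (block_prod n m V) (sep_sum n m \<phi>) ((real m + 1) * \<eta>)"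
  unfolding var_convex_witness_def
proof (intro conjI)
  show "convex_set_n (offs n m) (block_prod n m U)" "convex_set_n (offs n m) (block_prod n m V)"
    "nhd_n (offs n m) (block_prod n m U) (concat_blocks n m xb)"
    "nhd_n (offs n m) (block_prod n m V) (concat_blocks n m vb)"
    using witness by (auto intro!: convex_set_n_block_prod nhd_n_block_prod simp: var_convex_witness_def)
  show "lsc_n (offs n m) (sep_sum n m \<phi>)" "no_minf (offs n m) (sep_sum n m \<phi>)"
    "convex_fn_n (offs n m) (sep_sum n m \<phi>)"
    using minorant_props by (auto intro!: lsc_n_sep_sum no_minf_sep_sum convex_fn_n_sep_sum)
  show "\<forall>x\<in>block_prod n m U. sep_sum n m \<phi> x \<le> sep_sum n m f x"
    using witness unfolding sep_sum_def block_prod_def var_convex_witness_def by (auto intro!: sum_mono)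
  show "(real m + 1) * \<eta> > 0"
    using \<eta>(1) by simp
  show "{(x, v). x \<in> block_prod n m U \<and>
        sep_sum n m f x < sep_sum n m f (concat_blocks n m xb) + ereal ((real m + 1) * \<eta>) \<and>
        v \<in> block_prod n m V \<and> v \<in> lsd (offs n m) (sep_sum n m f) x}
      = {(x, v). x \<in> block_prod n m U \<and> v \<in> block_prod n m V \<and> v \<in> lsd (offs n m) (sep_sum n m \<phi>) x}"
    using lsd_sep_sum_minorant_of_lsd_sep_sum lsd_sep_sum_of_lsd_sep_sum_minorant(1,2) by blast
  show "\<forall>x v. x \<in> block_prod n m U \<and> v \<in> block_prod n m V \<and> v \<in> lsd (offs n m) (sep_sum n m \<phi>) x
      \<longrightarrow> sep_sum n m f x = sep_sum n m \<phi> x"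
    using lsd_sep_sum_of_lsd_sep_sum_minorant(3) by blast
qed

end

lemma lsd_sep_sum_concat_blocks:
  assumes "\<And>i. i < m \<Longrightarrow> vb i \<in> lsd (n i) (f i) (xb i)"
  shows "concat_blocks n m vb \<in> lsd (offs n m) (sep_sum n m f) (concat_blocks n m xb)"
proof (rule lsd_sep_sum_of_lsd_blk)
  fix i
  assume "i < m"
  moreover have "xb i \<in> Rn (n i)" "vb i \<in> Rn (n i)"
    using assms[OF \<open>i < m\<close>] by (simp_all add: lsd_def)
  ultimately show "blk n (concat_blocks n m vb) i \<in> lsd (n i) (f i) (blk n (concat_blocks n m xb) i)"
    using assms by (simp add: blk_concat_blocks)
qed simp_all

lemma var_convex_blocks_localize:
  assumes lsc: "\<And>i. i < m \<Longrightarrow> lsc_n (n i) (f i)"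
    and vc: "\<And>i. i < m \<Longrightarrow> var_convex (n i) (f i) (xb i) (vb i)"
  obtains \<eta> U V \<phi> \<epsilon> where "\<eta> > 0"
    "\<And>i. i < m \<Longrightarrow> var_convex_witness (n i) (f i) (xb i) (vb i) (U i) (V i) (\<phi> i) (\<epsilon> i)"
    "\<And>i. i < m \<Longrightarrow> (2 * real m + 1) * \<eta> \<le> \<epsilon> i"
    "\<And>i x. i < m \<Longrightarrow> x \<in> U i \<Longrightarrow> f i (xb i) - ereal \<eta> < f i x"
    "\<And>i x v. i < m \<Longrightarrow> x \<in> U i \<Longrightarrow> v \<in> V i \<Longrightarrow> v \<in> lsd (n i) (\<phi> i) x
      \<Longrightarrow> f i x < f i (xb i) + ereal \<eta>"
proof -
  have vb: "\<And>i. i < m \<Longrightarrow> vb i \<in> lsd (n i) (f i) (xb i)"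
    and "\<forall>i<m. \<exists>U V \<phi> \<epsilon>. var_convex_witness (n i) (f i) (xb i) (vb i) U V \<phi> \<epsilon>"
    using vc by (simp_all add: var_convex_iff_witness)
  then obtain U0 V0 \<phi> \<epsilon> where
    w0: "\<And>i. i < m \<Longrightarrow> var_convex_witness (n i) (f i) (xb i) (vb i) (U0 i) (V0 i) (\<phi> i) (\<epsilon> i)"
    by metis
  obtain e where "e > 0" and e: "\<And>i. i < m \<Longrightarrow> e \<le> \<epsilon> i"
    using ex_pos_le_all[of m \<epsilon>] w0 by (auto simp: var_convex_witness_def)
  define \<eta> where "\<eta> = e / (2 * real m + 1)"
  have "\<eta> > 0" and "\<And>i. i < m \<Longrightarrow> (2 * real m + 1) * \<eta> \<le> \<epsilon> i"
    using \<open>e > 0\<close> e by (simp_all add: \<eta>_def)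
  moreover have "\<forall>i<m. \<exists>U V. var_convex_witness (n i) (f i) (xb i) (vb i) U V (\<phi> i) (\<epsilon> i) \<and>
      (\<forall>x\<in>U. f i (xb i) - ereal \<eta> < f i x) \<and>
      (\<forall>x\<in>U. \<forall>v\<in>V. v \<in> lsd (n i) (\<phi> i) x \<longrightarrow> f i x < f i (xb i) + ereal \<eta>)"
    using var_convex_witness_localize[OF w0 vb lsc \<open>\<eta> > 0\<close>] by metis
  then obtain U V where "\<forall>i<m. var_convex_witness (n i) (f i) (xb i) (vb i) (U i) (V i) (\<phi> i) (\<epsilon> i) \<and>
      (\<forall>x\<in>U i. f i (xb i) - ereal \<eta> < f i x) \<and>
      (\<forall>x\<in>U i. \<forall>v\<in>V i. v \<in> lsd (n i) (\<phi> i) x \<longrightarrow> f i x < f i (xb i) + ereal \<eta>)"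
    by metis
  ultimately show ?thesis
    using that[of \<eta> U V \<phi> \<epsilon>] by blast
qed

theorem mainTheorem18:
  fixes m :: nat and n :: "nat \<Rightarrow> nat"
    and f :: "nat \<Rightarrow> (nat \<Rightarrow> real) \<Rightarrow> ereal"
    and xb vb :: "nat \<Rightarrow> nat \<Rightarrow> real"
  assumes "\<And>i. i < m \<Longrightarrow> no_minf (n i) (f i)"
    and "\<And>i. i < m \<Longrightarrow> lsc_n (n i) (f i)"
    and "\<And>i. i < m \<Longrightarrow> var_convex (n i) (f i) (xb i) (vb i)"
  shows "no_minf (\<Sum>i<m. n i) (sep_sum n m f)
    \<and> lsc_n (\<Sum>i<m. n i) (sep_sum n m f)
    \<and> var_convex (\<Sum>i<m. n i) (sep_sum n m f) (concat_blocks n m xb) (concat_blocks n m vb)"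
proof -
  obtain \<eta> U V \<phi> \<epsilon> where "\<eta> > 0"
    "\<And>i. i < m \<Longrightarrow> var_convex_witness (n i) (f i) (xb i) (vb i) (U i) (V i) (\<phi> i) (\<epsilon> i)"
    "\<And>i. i < m \<Longrightarrow> (2 * real m + 1) * \<eta> \<le> \<epsilon> i"
    "\<And>i x. i < m \<Longrightarrow> x \<in> U i \<Longrightarrow> f i (xb i) - ereal \<eta> < f i x"
    "\<And>i x v. i < m \<Longrightarrow> x \<in> U i \<Longrightarrow> v \<in> V i \<Longrightarrow> v \<in> lsd (n i) (\<phi> i) x
      \<Longrightarrow> f i x < f i (xb i) + ereal \<eta>"
    using var_convex_blocks_localize[where n = n and f = f, OF assms(2,3)] by metis
  then have "var_convex_witness (offs n m) (sep_sum n m f) (concat_blocks n m xb) (concat_blocks n m vb)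
      (block_prod n m U) (block_prod n m V) (sep_sum n m \<phi>) ((real m + 1) * \<eta>)"
    using assms(1,2) by (intro var_convex_witness_sep_sum)
  moreover have "concat_blocks n m vb \<in> lsd (offs n m) (sep_sum n m f) (concat_blocks n m xb)"
    using assms(3) by (intro lsd_sep_sum_concat_blocks) (simp add: var_convex_def)
  moreover have "no_minf (offs n m) (sep_sum n m f)" "lsc_n (offs n m) (sep_sum n m f)"
    using assms(1,2) by (simp_all add: no_minf_sep_sum lsc_n_sep_sum)
  ultimately show ?thesis
    unfolding var_convex_iff_witness offs_def[symmetric] by blast
qed

end
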